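(* Let $d\ge5$, $R>1$, $N$ a positive integer and $x_1,\dots,x_N\in\mathbb{R}^d$. Let $X^{(1)},\dots,X^{(N)}$ be independent Brownian motions with $X^{(i)}_0=x_i$, with joint expectation $E$, and $\overline X_N=(X^{(1)},\dots,X^{(N)})$. Then, for a constant $C=C(d)$, $$E[\mathrm{cap}(\Phi(\overline X_N,R))]\le CNR^2\quad\text{and}\quad E[\mathrm{cap}(\Phi(\overline X_N,R))^2]\le CN^2R^4.$$
   Context: Fix a constant $c_0>0$ (depending on $d$) such that for all $R>0$, a Brownian motion started at $0$ stays in the ball $B(0,R/2)$ up to time $c_0R^2$ with probability at least $0.99$. For trajectories $w_1,\dots,w_N:[0,\infty)\to\mathbb{R}^d$ with $w_i(0)=x_i$, and $R>1$, set $\Phi((w_1,\dots,w_N),R)=\bigcup_{i=1}^N B\big(w_i([0,T^{(i)}\wedge c_0R^2]),1\big)$, where $T^{(i)}$ is the exit time of $w_i$ from the ball of radius $R/2$ centered at $x_i$ and $B(A,1)=\bigcup_{a\in A}B(a,1)$ with closed Euclidean balls. $\mathrm{cap}$ is Brownian capacity (total mass of the equilibrium measure). *)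

theory Defs
  imports "HOL-Probability.Probability"
begin

definition gauss_density :: "real \<Rightarrow> 'a::euclidean_space \<Rightarrow> real" where
  "gauss_density s y = (2 * pi * s) powr (- real DIM('a) / 2) * exp (- (norm y)\<^sup>2 / (2 * s))"

text \<open>X 0, ..., X (N-1) are independent standard Brownian motions on the probability
  space M with X i 0 = x i: continuous paths, and for every finite increasing time grid
  all increments (over all i < N and all grid steps) are mutually independent and
  Gaussian with covariance (time step) times identity.\<close>
definition indep_BMs ::
  "'w measure \<Rightarrow> nat \<Rightarrow> (nat \<Rightarrow> real \<Rightarrow> 'w \<Rightarrow> 'a::euclidean_space) \<Rightarrow> (nat \<Rightarrow> 'a) \<Rightarrow> bool" where
  "indep_BMs M N X x \<longleftrightarrow>
     prob_space M \<and>
     (\<forall>i<N. \<forall>t\<ge>0. X i t \<in> borel_measurable M) \<and>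
     (\<forall>i<N. \<forall>\<omega>\<in>space M. X i 0 \<omega> = x i \<and> continuous_on {0..} (\<lambda>t. X i t \<omega>)) \<and>
     (\<forall>(n::nat) (ts::nat \<Rightarrow> real). 0 \<le> ts 0 \<and> (\<forall>k<n. ts k < ts (Suc k)) \<longrightarrow>
        prob_space.indep_vars M (\<lambda>_. borel)
          (\<lambda>(i, k) \<omega>. X i (ts (Suc k)) \<omega> - X i (ts k) \<omega>) ({..<N} \<times> {..<n}) \<and>
        (\<forall>i<N. \<forall>k<n. distributed M lborel (\<lambda>\<omega>. X i (ts (Suc k)) \<omega> - X i (ts k) \<omega>)
                          (\<lambda>y. ennreal (gauss_density (ts (Suc k) - ts k) y))))"

definition brownian_motion :: "'w measure \<Rightarrow> (real \<Rightarrow> 'w \<Rightarrow> 'a::euclidean_space) \<Rightarrow> 'a \<Rightarrow> bool" where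
  "brownian_motion M B x \<longleftrightarrow> indep_BMs M 1 (\<lambda>_. B) (\<lambda>_. x)"

text \<open>Green's function of standard Brownian motion (generator Laplacian/2) in dimension
  d = DIM('a) \<ge> 3: G(x,y) = Gamma(d/2-1) / (2 pi^(d/2)) |x-y|^(2-d), infinite on the diagonal.\<close>
definition green :: "'a::euclidean_space \<Rightarrow> 'a \<Rightarrow> ennreal" where
  "green x y = (if x = y then \<infinity> else
     ennreal (Gamma (real DIM('a) / 2 - 1) / (2 * pi powr (real DIM('a) / 2))
              * dist x y powr (2 - real DIM('a))))"

text \<open>Brownian (Newtonian) capacity: total mass of the equilibrium measure, given by the
  variational characterisation sup of mu(K) over Borel measures mu carried by K whose
  Green potential is at most 1 everywhere.\<close>
definition cap :: "'a::euclidean_space set \<Rightarrow> ennreal" where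
  "cap K = (SUP \<mu> \<in> {\<mu> :: 'a measure. sets \<mu> = sets borel \<and> emeasure \<mu> (UNIV - K) = 0 \<and>
                         (\<forall>x. (\<integral>\<^sup>+ y. green x y \<partial>\<mu>) \<le> 1)}. emeasure \<mu> K)"

text \<open>Times in [0, T \<and> c0 R^2], T the exit time of w from the open ball of radius R/2
  around w 0 (t \<le> T iff w stays in the ball on [0,t)).\<close>
definition run_times :: "real \<Rightarrow> real \<Rightarrow> (real \<Rightarrow> 'a::euclidean_space) \<Rightarrow> real set" where
  "run_times c0 R w = {t. 0 \<le> t \<and> t \<le> c0 * R\<^sup>2 \<and>
                        (\<forall>s. 0 \<le> s \<and> s < t \<longrightarrow> dist (w s) (w 0) < R / 2)}"

definition Phi :: "real \<Rightarrow> real \<Rightarrow> nat \<Rightarrow> (nat \<Rightarrow> real \<Rightarrow> 'a::euclidean_space) \<Rightarrow> 'a set" where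
  "Phi c0 R N w = (\<Union>i<N. \<Union>a \<in> w i ` run_times c0 R (w i). cball a 1)"

end

theory Submission
  imports Defs
begin

text \<open>
  Let q = d - 2. Cut each walk into the unit time cells [k, k+1], k < ceil(c0 R^2). By a dyadic
  (Garsia-type) chaining argument, on its cell the path stays within 10 E^(1/(2q)) of its value
  at time k, where E is the energy summing the 2q-th powers of the dyadic increments with weights
  (10/9)^(2qm). A closed ball of radius r has capacity at most r^q / kappa, because the Green
  function is at least kappa r^(-q) on it while admissible measures have potential at most 1.
  Subadditivity over the covering balls gives cap Phi <= (400^q / kappa) * sum (1 + E), and
  Cauchy-Schwarz over the N ceil(c0 R^2) cells gives
  cap Phi ^ 2 <= N ceil(c0 R^2) (400^q / kappa^2) * sum (1 + E). The Gaussian moments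
  E |B t - B s|^(2q) <= A (t - s)^q turn the expected energy into a geometric series of ratio
  2 (50/81)^q <= 1/2 when q >= 3, so each cell contributes a bounded expectation.
\<close>

section \<open>Gaussian moments of Brownian increments\<close>

lemma power_le_fact_mult_exp:
  fixes v :: real
  assumes "0 \<le> v"
  shows "v ^ q \<le> fact q * exp v"
proof -
  have "(\<lambda>n. v ^ n /\<^sub>R fact n) sums exp v" by (rule exp_converges)
  then have "(\<Sum>n\<in>{q}. v ^ n /\<^sub>R fact n) \<le> exp v"
    using sum_le_suminf[OF sums_summable, of _ _ "{q}"] assms sums_unique
    by (fastforce simp: divide_simps)
  then show ?thesis by (simp add: divide_simps mult.commute)
qed

lemma gauss_density_nonneg: "0 \<le> gauss_density s y"
  by (simp add: gauss_density_def)

lemma gauss_density_measurable [measurable]: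
  "gauss_density s \<in> borel_measurable (borel :: 'a::euclidean_space measure)"
  unfolding gauss_density_def by measurable

definition gauss_moment_const :: "nat \<Rightarrow> nat \<Rightarrow> real" where
  "gauss_moment_const d q = 4 ^ q * fact q * 2 powr (real d / 2)"

lemma gauss_moment_const_nonneg: "0 \<le> gauss_moment_const d q"
  by (simp add: gauss_moment_const_def)

lemma gauss_density_moment_le:
  fixes y :: "'a::euclidean_space"
  assumes s: "0 < s"
  shows "gauss_density s y * norm y ^ (2 * q)
           \<le> gauss_moment_const DIM('a) q * s ^ q * gauss_density (2 * s) y"
proof -
  define v where "v = norm y ^ 2"
  define e where "e = - real DIM('a) / 2"
  \<comment> \<open>Half of the Gaussian decay absorbs the polynomial weight.\<close>
  have "(v / (4 * s)) ^ q \<le> fact q * exp (v / (4 * s))"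
    using s by (intro power_le_fact_mult_exp) (simp add: v_def)
  then have v_pow: "v ^ q \<le> 4 ^ q * s ^ q * fact q * exp (v / (4 * s))"
    using s by (simp add: power_divide divide_simps power_mult_distrib mult_ac)
  have exp_split: "exp (- v / (2 * s)) * exp (v / (4 * s)) = exp (- v / (2 * (2 * s)))"
    using s by (simp add: exp_add[symmetric] field_simps)
  have normalisation: "(2 * pi * s) powr e = 2 powr (real DIM('a) / 2) * (2 * pi * (2 * s)) powr e"
  proof -
    have "(2 * pi * (2 * s)) powr e = 2 powr e * (2 * pi * s) powr e"
      using s by (subst powr_mult[symmetric]) (auto simp: mult_ac)
    moreover have "2 powr (real DIM('a) / 2) * 2 powr e = 1"
      by (simp add: e_def powr_add[symmetric])
    ultimately show ?thesis by (metis mult.assoc mult_1)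
  qed
  have "gauss_density s y * norm y ^ (2 * q) = (2 * pi * s) powr e * (exp (- v / (2 * s)) * v ^ q)"
    by (simp add: gauss_density_def v_def e_def power_mult)
  also have "\<dots> \<le> (2 * pi * s) powr e * (exp (- v / (2 * s)) * (4 ^ q * s ^ q * fact q * exp (v / (4 * s))))"
    by (intro mult_left_mono v_pow) auto
  also have "\<dots> = 4 ^ q * fact q * s ^ q * ((2 * pi * s) powr e * (exp (- v / (2 * s)) * exp (v / (4 * s))))"
    by (simp add: mult_ac)
  also have "\<dots> = gauss_moment_const DIM('a) q * s ^ q * gauss_density (2 * s) y"
    unfolding exp_split normalisation
    by (simp add: gauss_density_def gauss_moment_const_def v_def e_def mult_ac)
  finally show ?thesis .
qed

lemma indep_BMs_prob_space: "indep_BMs M N X x \<Longrightarrow> prob_space M"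
  by (simp add: indep_BMs_def)

lemma indep_BMs_measurable: "indep_BMs M N X x \<Longrightarrow> i < N \<Longrightarrow> 0 \<le> t \<Longrightarrow> X i t \<in> borel_measurable M"
  by (simp add: indep_BMs_def)

lemma indep_BMs_continuous:
  "indep_BMs M N X x \<Longrightarrow> \<omega> \<in> space M \<Longrightarrow> i < N \<Longrightarrow> continuous_on {0..} (\<lambda>t. X i t \<omega>)"
  by (simp add: indep_BMs_def)

lemma indep_BMs_increment_distributed:
  assumes "indep_BMs M N X x" "i < N" "0 \<le> t1" "t1 < t2"
  shows "distributed M lborel (\<lambda>\<omega>. X i t2 \<omega> - X i t1 \<omega>) (\<lambda>y. ennreal (gauss_density (t2 - t1) y))"
proof -
  define ts :: "nat \<Rightarrow> real" where "ts = (\<lambda>k. if k = 0 then t1 else t2)"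
  have "0 \<le> ts 0 \<and> (\<forall>k<1. ts k < ts (Suc k))" using assms by (simp add: ts_def)
  with assms(1) have "\<forall>i<N. \<forall>k<1. distributed M lborel (\<lambda>\<omega>. X i (ts (Suc k)) \<omega> - X i (ts k) \<omega>)
                          (\<lambda>y. ennreal (gauss_density (ts (Suc k) - ts k) y))"
    unfolding indep_BMs_def by blast
  with assms(2) show ?thesis by (auto simp: ts_def)
qed

lemma nn_integral_distributed_density_eq_1:
  assumes "prob_space M" "distributed M N Y f"
  shows "(\<integral>\<^sup>+y. f y \<partial>N) = 1"
proof -
  have "Y -` space N \<inter> space M = space M"
    using measurable_space[OF distributed_measurable[OF assms(2)]] by blast
  then have "1 = emeasure M (Y -` space N \<inter> space M)"
    using assms(1) by (simp add: prob_space.emeasure_space_1)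
  also have "\<dots> = (\<integral>\<^sup>+y. f y * indicator (space N) y \<partial>N)"
    by (rule distributed_emeasure[OF assms(2)]) simp
  also have "\<dots> = (\<integral>\<^sup>+y. f y \<partial>N)"
    by (intro nn_integral_cong) simp
  finally show ?thesis ..
qed

lemma indep_BMs_increment_moment:
  fixes X :: "nat \<Rightarrow> real \<Rightarrow> 'w \<Rightarrow> 'a::euclidean_space"
  assumes BM: "indep_BMs M N X x" and "i < N" "0 \<le> t1" "t1 < t2"
  shows "(\<integral>\<^sup>+\<omega>. ennreal (norm (X i t2 \<omega> - X i t1 \<omega>) ^ (2 * q)) \<partial>M)
          \<le> ennreal (gauss_moment_const DIM('a) q * (t2 - t1) ^ q)"
proof -
  define s where "s = t2 - t1"
  define A where "A = gauss_moment_const DIM('a) q"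
  have s: "s > 0" using assms by (simp add: s_def)
  have A: "A \<ge> 0" by (simp add: A_def gauss_moment_const_nonneg)
  \<comment> \<open>The normalisation of the Gaussian density is read off from the law of an increment of length 2 s.\<close>
  have "(\<integral>\<^sup>+y. ennreal (gauss_density (2 * s) (y::'a)) \<partial>lborel) = 1"
    using indep_BMs_increment_distributed[OF BM \<open>i < N\<close>, of 0 "2 * s"] s
    by (intro nn_integral_distributed_density_eq_1[OF indep_BMs_prob_space[OF BM]]) simp
  moreover have "(\<integral>\<^sup>+\<omega>. ennreal (norm (X i t2 \<omega> - X i t1 \<omega>) ^ (2 * q)) \<partial>M)
      = (\<integral>\<^sup>+y. ennreal (gauss_density s (y::'a)) * ennreal (norm y ^ (2 * q)) \<partial>lborel)"
    using distributed_nn_integral[OF indep_BMs_increment_distributed[OF assms], of "\<lambda>y. ennreal (norm y ^ (2 * q))"]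
    by (simp add: s_def)
  moreover have "\<dots> \<le> (\<integral>\<^sup>+y. ennreal (A * s ^ q) * ennreal (gauss_density (2 * s) (y::'a)) \<partial>lborel)"
    using gauss_density_moment_le[OF s] s A
    by (intro nn_integral_mono)
       (simp add: A_def gauss_density_nonneg ennreal_mult[symmetric] ennreal_leI mult_ac)
  ultimately show ?thesis
    by (simp add: nn_integral_cmult A_def s_def)
qed

section \<open>Capacity of finite unions of balls\<close>

definition green_const :: "'a::euclidean_space itself \<Rightarrow> real" where
  "green_const _ = Gamma (real DIM('a) / 2 - 1) / (2 * pi powr (real DIM('a) / 2))"

lemma green_const_pos: "3 \<le> DIM('a::euclidean_space) \<Longrightarrow> 0 < green_const TYPE('a)"
  unfolding green_const_def by (intro divide_pos_pos Gamma_real_pos) auto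

lemma green_ge_on_cball:
  fixes c y :: "'a::euclidean_space"
  assumes D: "3 \<le> DIM('a)" and r: "0 < r" and y: "dist c y \<le> r"
  shows "ennreal (green_const TYPE('a) / r ^ (DIM('a) - 2)) \<le> green c y"
proof (cases "c = y")
  case False
  define q where "q = DIM('a) - 2"
  have d0: "0 < dist c y" using False by simp
  have "2 - real DIM('a) = - real q" using D by (simp add: q_def of_nat_diff)
  then have "dist c y powr (2 - real DIM('a)) = inverse (dist c y ^ q)"
    using d0 by (simp add: powr_minus powr_realpow)
  moreover have "inverse (r ^ q) \<le> inverse (dist c y ^ q)"
    using d0 y by (intro le_imp_inverse_le power_mono) auto
  ultimately have "green_const TYPE('a) / r ^ q \<le> green_const TYPE('a) * dist c y powr (2 - real DIM('a))"
    using green_const_pos[OF D] by (simp add: divide_inverse)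
  then show ?thesis
    using False by (simp add: green_def green_const_def q_def ennreal_leI)
qed (simp add: green_def)

lemma emeasure_cball_le_of_green_potential_le_1:
  fixes \<mu> :: "'a::euclidean_space measure"
  assumes D: "3 \<le> DIM('a)" and sets: "sets \<mu> = sets borel"
    and potential: "\<And>x. (\<integral>\<^sup>+ y. green x y \<partial>\<mu>) \<le> 1" and r: "0 < r"
  shows "emeasure \<mu> (cball c r) \<le> ennreal (r ^ (DIM('a) - 2) / green_const TYPE('a))"
proof -
  define a where "a = green_const TYPE('a) / r ^ (DIM('a) - 2)"
  have a: "0 < a" using green_const_pos[OF D] r by (simp add: a_def)
  have "ennreal a * emeasure \<mu> (cball c r) = (\<integral>\<^sup>+ y. ennreal a * indicator (cball c r) y \<partial>\<mu>)"
    using sets by (simp add: nn_integral_cmult_indicator)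
  also have "\<dots> \<le> (\<integral>\<^sup>+ y. green c y \<partial>\<mu>)"
    using green_ge_on_cball[OF D r] by (intro nn_integral_mono) (simp add: a_def split: split_indicator)
  also have "\<dots> \<le> 1" by (rule potential)
  finally have le: "ennreal a * emeasure \<mu> (cball c r) \<le> 1" .
  have "emeasure \<mu> (cball c r) = ennreal (1 / a) * (ennreal a * emeasure \<mu> (cball c r))"
    using a by (simp add: ennreal_mult[symmetric] mult.assoc[symmetric])
  also have "\<dots> \<le> ennreal (1 / a)"
    using mult_left_mono[OF le, of "ennreal (1 / a)"] by simp
  finally show ?thesis by (simp add: a_def)
qed

lemma cap_le_sum_cball:
  fixes K :: "'a::euclidean_space set"
  assumes D: "3 \<le> DIM('a)" and J: "finite J" and r: "\<And>j. j \<in> J \<Longrightarrow> 0 < r j"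
    and K: "K \<subseteq> (\<Union>j\<in>J. cball (c j) (r j))"
  shows "cap K \<le> ennreal (\<Sum>j\<in>J. r j ^ (DIM('a) - 2) / green_const TYPE('a))"
  unfolding cap_def
proof (rule SUP_least, clarify)
  fix \<mu> :: "'a measure"
  assume sets: "sets \<mu> = sets borel" and potential: "\<forall>x. (\<integral>\<^sup>+ y. green x y \<partial>\<mu>) \<le> 1"
  have balls: "cball (c j) (r j) \<in> sets \<mu>" for j
    unfolding sets by (rule borel_closed) simp
  have "emeasure \<mu> K \<le> emeasure \<mu> (\<Union>j\<in>J. cball (c j) (r j))"
    using K J balls by (intro emeasure_mono sets.finite_UN) auto
  also have "\<dots> \<le> (\<Sum>j\<in>J. emeasure \<mu> (cball (c j) (r j)))"
    using J balls by (intro emeasure_subadditive_finite) auto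
  also have "\<dots> \<le> (\<Sum>j\<in>J. ennreal (r j ^ (DIM('a) - 2) / green_const TYPE('a)))"
    using potential r by (intro sum_mono emeasure_cball_le_of_green_potential_le_1[OF D sets]) auto
  also have "\<dots> = ennreal (\<Sum>j\<in>J. r j ^ (DIM('a) - 2) / green_const TYPE('a))"
    using r green_const_pos[OF D] by (intro sum_ennreal) (auto intro: less_imp_le)
  finally show "emeasure \<mu> K \<le> ennreal (\<Sum>j\<in>J. r j ^ (DIM('a) - 2) / green_const TYPE('a))" .
qed

section \<open>Dyadic chaining\<close>

lemma dyadic_chain_le:
  fixes w :: "real \<Rightarrow> 'a::real_normed_vector"
  assumes increment: "\<And>m j. j < 2 ^ m \<Longrightarrow>
      norm (w (a + real (j + 1) / 2 ^ m) - w (a + real j / 2 ^ m)) \<le> b * \<theta> ^ m"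
    and "0 \<le> b" "0 \<le> \<theta>"
  shows "l \<le> 2 ^ M \<Longrightarrow> norm (w (a + real l / 2 ^ M) - w a) \<le> b * (\<Sum>m\<le>M. \<theta> ^ m)"
proof (induction M arbitrary: l)
  case 0
  then consider "l = 0" | "l = 1" by fastforce
  then show ?case
    using increment[of 0 0] \<open>0 \<le> b\<close> by cases simp_all
next
  case (Suc M)
  have sum_Suc: "b * (\<Sum>m\<le>Suc M. \<theta> ^ m) = b * (\<Sum>m\<le>M. \<theta> ^ m) + b * \<theta> ^ Suc M"
    by (simp add: distrib_left)
  obtain l' where "l = 2 * l' \<or> l = 2 * l' + 1" by (metis oddE evenE)
  then show ?case
  proof
    assume l: "l = 2 * l'"
    then have "norm (w (a + real l / 2 ^ Suc M) - w a) \<le> b * (\<Sum>m\<le>M. \<theta> ^ m)"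
      using Suc by simp
    moreover have "0 \<le> b * \<theta> ^ Suc M"
      using \<open>0 \<le> b\<close> \<open>0 \<le> \<theta>\<close> by simp
    ultimately show ?case
      unfolding sum_Suc by linarith
  next
    assume l: "l = 2 * l' + 1"
    then have l': "l' < 2 ^ M" using Suc.prems by simp
    have half: "real (2 * l') / 2 ^ Suc M = real l' / 2 ^ M" by simp
    have "norm (w (a + real l / 2 ^ Suc M) - w a)
        \<le> norm (w (a + real (2 * l' + 1) / 2 ^ Suc M) - w (a + real (2 * l') / 2 ^ Suc M))
          + norm (w (a + real l' / 2 ^ M) - w a)"
      using norm_triangle_ineq[of "w (a + real l / 2 ^ Suc M) - w (a + real l' / 2 ^ M)"
          "w (a + real l' / 2 ^ M) - w a"] l half by simp
    also have "\<dots> \<le> b * \<theta> ^ Suc M + b * (\<Sum>m\<le>M. \<theta> ^ m)"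
      using increment[of "2 * l'" "Suc M"] Suc.IH[of l'] l' by (intro add_mono) simp_all
    finally have "norm (w (a + real l / 2 ^ Suc M) - w a) \<le> b * \<theta> ^ Suc M + b * (\<Sum>m\<le>M. \<theta> ^ m)" .
    then show ?case unfolding sum_Suc by linarith
  qed
qed

lemma norm_diff_le_of_dyadic_increments:
  fixes w :: "real \<Rightarrow> 'a::real_normed_vector"
  assumes cont: "continuous_on {a..a+1} w"
    and increment: "\<And>m j. j < 2 ^ m \<Longrightarrow>
      norm (w (a + real (j + 1) / 2 ^ m) - w (a + real j / 2 ^ m)) \<le> b * \<theta> ^ m"
    and b: "0 \<le> b" and \<theta>: "0 \<le> \<theta>" "\<theta> < 1" and t: "t \<in> {a..a+1}"
  shows "norm (w t - w a) \<le> b / (1 - \<theta>)"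
proof -
  define l where "l = (\<lambda>M::nat. nat \<lfloor>(t - a) * 2 ^ M\<rfloor>)"
  define s where "s = (\<lambda>M. a + real (l M) / 2 ^ M)"
  have ta: "0 \<le> t - a" "t - a \<le> 1" using t by auto
  have l_floor: "real (l M) = of_int \<lfloor>(t - a) * 2 ^ M\<rfloor>" for M
    using ta by (simp add: l_def)
  have s_le: "s M \<le> t" for M
    using of_int_floor_le[of "(t - a) * 2 ^ M"] by (simp add: s_def l_floor field_simps)
  have s_ge: "t - (1/2) ^ M \<le> s M" for M
  proof -
    have "t - a < (real (l M) + 1) / 2 ^ M"
      using real_of_int_floor_add_one_gt[of "(t - a) * 2 ^ M"]
      by (simp add: l_floor pos_less_divide_eq)
    then show ?thesis by (simp add: s_def add_divide_distrib power_one_over)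
  qed
  have l_le: "l M \<le> 2 ^ M" for M
  proof -
    have "real (l M) \<le> (t - a) * 2 ^ M" unfolding l_floor by (rule of_int_floor_le)
    also have "\<dots> \<le> 2 ^ M" using ta by simp
    finally have "real (l M) \<le> real (2 ^ M)" by simp
    then show ?thesis by (simp only: of_nat_le_iff)
  qed
  have s_in: "s M \<in> {a..a+1}" for M
    using s_le[of M] ta l_le[of M] by (auto simp: s_def)
  have lim: "s \<longlonglongrightarrow> t"
  proof (rule tendsto_sandwich[of "\<lambda>M. t - (1/2) ^ M" _ _ "\<lambda>M. t"])
    have "(\<lambda>M. t - (1/2::real) ^ M) \<longlonglongrightarrow> t - 0"
      by (intro tendsto_diff tendsto_const LIMSEQ_power_zero) simp
    then show "(\<lambda>M. t - (1/2::real) ^ M) \<longlonglongrightarrow> t" by simp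
  qed (use s_ge s_le in simp_all)
  have "(\<lambda>M. w (s M)) \<longlonglongrightarrow> w t"
    using continuous_on_tendsto_compose[OF cont lim t] s_in by simp
  then have "(\<lambda>M. norm (w (s M) - w a)) \<longlonglongrightarrow> norm (w t - w a)"
    by (intro tendsto_intros)
  moreover have "norm (w (s M) - w a) \<le> b / (1 - \<theta>)" for M
  proof -
    have "norm (w (s M) - w a) \<le> b * (\<Sum>m\<le>M. \<theta> ^ m)"
      unfolding s_def by (rule dyadic_chain_le[OF increment b \<theta>(1) l_le])
    also have "(\<Sum>m\<le>M. \<theta> ^ m) \<le> (\<Sum>m. \<theta> ^ m)"
      using \<theta> by (intro sum_le_suminf summable_geometric) auto
    also have "(\<Sum>m. \<theta> ^ m) = 1 / (1 - \<theta>)"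
      using \<theta> by (intro suminf_geometric) simp
    finally show ?thesis using b by (simp add: mult_left_mono)
  qed
  ultimately show ?thesis by (intro LIMSEQ_le_const2) auto
qed

text \<open>
  The weight (10/9)^(2qm) is small enough for the expected level sums to decay geometrically
  when q >= 3, and large enough for the increments at level m to be at most E^(1/(2q)) (9/10)^m.
\<close>

definition dyadic_level :: "nat \<Rightarrow> (real \<Rightarrow> 'a::real_normed_vector) \<Rightarrow> real \<Rightarrow> nat \<Rightarrow> ennreal" where
  "dyadic_level q w a m = (\<Sum>j<2 ^ m. ennreal ((10/9) ^ (2 * q * m) *
      norm (w (a + real (j + 1) / 2 ^ m) - w (a + real j / 2 ^ m)) ^ (2 * q)))"

definition dyadic_energy :: "nat \<Rightarrow> (real \<Rightarrow> 'a::real_normed_vector) \<Rightarrow> real \<Rightarrow> ennreal" where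
  "dyadic_energy q w a = (\<Sum>m. dyadic_level q w a m)"

lemma dyadic_increment_le_energy:
  assumes finite: "dyadic_energy q w a \<noteq> \<infinity>" and q: "0 < q" and j: "j < 2 ^ m"
  shows "norm (w (a + real (j + 1) / 2 ^ m) - w (a + real j / 2 ^ m))
           \<le> root (2 * q) (enn2real (dyadic_energy q w a)) * (9/10) ^ m"
proof -
  define z where "z = enn2real (dyadic_energy q w a)"
  define d where "d = norm (w (a + real (j + 1) / 2 ^ m) - w (a + real j / 2 ^ m))"
  have "ennreal ((10/9) ^ (2 * q * m) * d ^ (2 * q)) \<le> dyadic_level q w a m"
    unfolding dyadic_level_def d_def using j by (intro member_le_sum[of j "{..<2 ^ m}"]) auto
  also have "\<dots> \<le> dyadic_energy q w a"
    unfolding dyadic_energy_def using sum_le_suminf[OF summableI, of "{m}"] by simp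
  also have "\<dots> = ennreal z"
    using finite by (simp add: z_def ennreal_enn2real_if)
  finally have "((10/9) ^ m * d) ^ (2 * q) \<le> z"
    by (simp add: z_def d_def power_mult_distrib power_mult[symmetric] mult.commute)
  then have "(10/9) ^ m * d \<le> root (2 * q) z"
    using q real_root_le_mono[of "2 * q"] real_root_power_cancel[of "2 * q" "(10/9) ^ m * d"]
    by (fastforce simp: d_def)
  then have "(9/10) ^ m * ((10/9) ^ m * d) \<le> (9/10) ^ m * root (2 * q) z"
    by (intro mult_left_mono) auto
  then show ?thesis
    by (simp add: z_def d_def mult.assoc[symmetric] power_mult_distrib[symmetric] mult.commute)
qed

lemma dist_le_dyadic_energy:
  assumes "continuous_on {a..a+1} w" "dyadic_energy q w a \<noteq> \<infinity>" "0 < q" "t \<in> {a..a+1}"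
  shows "dist (w a) (w t) \<le> 10 * root (2 * q) (enn2real (dyadic_energy q w a))"
proof -
  have "norm (w t - w a) \<le> root (2 * q) (enn2real (dyadic_energy q w a)) / (1 - 9/10)"
    using assms(3) by (intro norm_diff_le_of_dyadic_increments[OF assms(1) dyadic_increment_le_energy[OF assms(2,3)] _ _ _ assms(4)]) auto
  then show ?thesis by (simp add: dist_norm norm_minus_commute mult.commute)
qed

lemma dyadic_level_measurable:
  assumes "indep_BMs M N X x" "i < N" "0 \<le> a"
  shows "(\<lambda>\<omega>. dyadic_level q (\<lambda>t. X i t \<omega>) a m) \<in> borel_measurable M"
proof -
  have [measurable]: "X i (a + real j / 2 ^ m) \<in> borel_measurable M" for j
    using assms by (intro indep_BMs_measurable) auto
  have [measurable]: "X i (a + real (j + 1) / 2 ^ m) \<in> borel_measurable M" for j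
    using assms by (intro indep_BMs_measurable) auto
  show ?thesis unfolding dyadic_level_def by measurable
qed

lemma dyadic_energy_measurable:
  assumes "indep_BMs M N X x" "i < N" "0 \<le> a"
  shows "(\<lambda>\<omega>. dyadic_energy q (\<lambda>t. X i t \<omega>) a) \<in> borel_measurable M"
  unfolding dyadic_energy_def using dyadic_level_measurable[OF assms] by measurable

lemma nn_integral_dyadic_level_le:
  fixes X :: "nat \<Rightarrow> real \<Rightarrow> 'w \<Rightarrow> 'a::euclidean_space"
  assumes BM: "indep_BMs M N X x" and "i < N" "0 \<le> a"
  shows "(\<integral>\<^sup>+\<omega>. dyadic_level q (\<lambda>t. X i t \<omega>) a m \<partial>M)
         \<le> ennreal (gauss_moment_const DIM('a) q * (2 * (10/9) ^ (2 * q) * (1/2) ^ q) ^ m)"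
proof -
  define A where "A = gauss_moment_const DIM('a) q"
  define incr where "incr j \<omega> = norm (X i (a + real (j + 1) / 2 ^ m) \<omega> - X i (a + real j / 2 ^ m) \<omega>)" for j \<omega>
  have A: "0 \<le> A" by (simp add: A_def gauss_moment_const_nonneg)
  have step: "(a + real (j + 1) / 2 ^ m) - (a + real j / 2 ^ m) = (1/2) ^ m" for j :: nat
    by (simp add: diff_divide_distrib[symmetric] power_one_over)
  have [measurable]: "X i (a + real j / 2 ^ m) \<in> borel_measurable M" for j
    using assms by (intro indep_BMs_measurable) auto
  have [measurable]: "X i (a + real (j + 1) / 2 ^ m) \<in> borel_measurable M" for j
    using assms by (intro indep_BMs_measurable) auto
  have [measurable]: "incr j \<in> borel_measurable M" for j
    unfolding incr_def by measurable
  have "dyadic_level q (\<lambda>t. X i t \<omega>) a m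
      = (\<Sum>j<2 ^ m. ennreal ((10/9) ^ (2 * q * m)) * ennreal (incr j \<omega> ^ (2 * q)))" for \<omega>
    by (simp add: dyadic_level_def incr_def ennreal_mult)
  then have "(\<integral>\<^sup>+\<omega>. dyadic_level q (\<lambda>t. X i t \<omega>) a m \<partial>M)
      = (\<Sum>j<2 ^ m. \<integral>\<^sup>+\<omega>. ennreal ((10/9) ^ (2 * q * m)) * ennreal (incr j \<omega> ^ (2 * q)) \<partial>M)"
    by (simp only:) (rule nn_integral_sum, measurable)
  also have "\<dots> = (\<Sum>j<2 ^ m. ennreal ((10/9) ^ (2 * q * m)) * \<integral>\<^sup>+\<omega>. ennreal (incr j \<omega> ^ (2 * q)) \<partial>M)"
    by (intro sum.cong nn_integral_cmult refl) measurable
  also have "\<dots> \<le> (\<Sum>j<(2::nat) ^ m. ennreal ((10/9) ^ (2 * q * m)) * ennreal (A * ((1/2) ^ m) ^ q))"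
  proof (intro sum_mono mult_left_mono)
    fix j :: nat
    have "(\<integral>\<^sup>+\<omega>. ennreal (incr j \<omega> ^ (2 * q)) \<partial>M)
        \<le> ennreal (A * ((a + real (j + 1) / 2 ^ m) - (a + real j / 2 ^ m)) ^ q)"
      unfolding incr_def A_def using \<open>0 \<le> a\<close>
      by (intro indep_BMs_increment_moment[OF BM \<open>i < N\<close>]) (simp_all add: divide_strict_right_mono)
    then show "(\<integral>\<^sup>+\<omega>. ennreal (incr j \<omega> ^ (2 * q)) \<partial>M) \<le> ennreal (A * ((1/2) ^ m) ^ q)"
      by (simp only: step)
  qed simp
  also have "\<dots> = ennreal (2 ^ m * ((10/9) ^ (2 * q * m) * (A * ((1/2) ^ m) ^ q)))"
    using A by (simp add: ennreal_mult[symmetric] ennreal_of_nat_eq_real_of_nat)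
  also have "2 ^ m * ((10/9) ^ (2 * q * m) * (A * ((1/2) ^ m) ^ q))
      = A * (2 * (10/9) ^ (2 * q) * (1/2::real) ^ q) ^ m"
  proof -
    have "((10/9::real) ^ (2 * q)) ^ m = (10/9) ^ (2 * q * m)" "((1/2::real) ^ q) ^ m = ((1/2) ^ m) ^ q"
      by (simp_all only: power_mult[symmetric] mult.commute)
    then show ?thesis by (simp add: power_mult_distrib mult_ac)
  qed
  finally show ?thesis by (simp add: A_def)
qed

lemma nn_integral_dyadic_energy_le:
  fixes X :: "nat \<Rightarrow> real \<Rightarrow> 'w \<Rightarrow> 'a::euclidean_space"
  assumes BM: "indep_BMs M N X x" and "i < N" "0 \<le> a" and q: "3 \<le> q"
  shows "(\<integral>\<^sup>+\<omega>. dyadic_energy q (\<lambda>t. X i t \<omega>) a \<partial>M) \<le> ennreal (2 * gauss_moment_const DIM('a) q)"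
proof -
  define A where "A = gauss_moment_const DIM('a) q"
  define \<rho> where "\<rho> = 2 * (10/9) ^ (2 * q) * (1/2::real) ^ q"
  have A: "0 \<le> A" by (simp add: A_def gauss_moment_const_nonneg)
  have "\<rho> = 2 * (50/81) ^ q"
    by (simp add: \<rho>_def power_mult power_mult_distrib[symmetric] power2_eq_square)
  moreover have "(50/81::real) ^ q \<le> (50/81) ^ 3"
    using q by (intro power_decreasing) auto
  ultimately have \<rho>: "0 \<le> \<rho>" "\<rho> \<le> 1/2"
    by (auto simp: power3_eq_cube)
  have "(\<integral>\<^sup>+\<omega>. dyadic_energy q (\<lambda>t. X i t \<omega>) a \<partial>M) = (\<Sum>m. \<integral>\<^sup>+\<omega>. dyadic_level q (\<lambda>t. X i t \<omega>) a m \<partial>M)"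
    unfolding dyadic_energy_def using dyadic_level_measurable[OF assms(1-3)] by (rule nn_integral_suminf)
  also have "\<dots> \<le> (\<Sum>m. ennreal (A * \<rho> ^ m))"
    using nn_integral_dyadic_level_le[OF assms(1-3)] by (intro suminf_le) (auto simp: A_def \<rho>_def)
  also have "(\<Sum>m. ennreal (A * \<rho> ^ m)) = ennreal (A * (1 / (1 - \<rho>)))"
  proof -
    have "(\<lambda>m. A * \<rho> ^ m) sums (A * (1 / (1 - \<rho>)))"
      using \<rho> by (intro sums_mult geometric_sums) auto
    then have "(\<lambda>m. ennreal (A * \<rho> ^ m)) sums ennreal (A * (1 / (1 - \<rho>)))"
      using \<rho> A by (subst sums_ennreal) auto
    then show ?thesis by (rule sums_unique[symmetric])
  qed
  also have "A * (1 / (1 - \<rho>)) \<le> A * 2"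
    using \<rho> A by (intro mult_left_mono) (simp_all add: divide_simps)
  finally show ?thesis by (simp add: A_def ennreal_leI mult.commute)
qed

section \<open>Covering Phi by balls\<close>

lemma obtain_unit_interval_below_ceiling:
  fixes t T :: real
  assumes "0 \<le> t" "t \<le> T" "0 < T"
  obtains k :: nat where "k < nat \<lceil>T\<rceil>" "real k \<le> t" "t \<le> real k + 1"
proof
  show "nat (\<lceil>t\<rceil> - 1) < nat \<lceil>T\<rceil>"
    using assms ceiling_mono[of t T] by linarith
  show "real (nat (\<lceil>t\<rceil> - 1)) \<le> t" "t \<le> real (nat (\<lceil>t\<rceil> - 1)) + 1"
    using assms ceiling_correct[of t] by linarith+
qed

lemma Phi_subset_UN_cball:
  fixes w :: "nat \<Rightarrow> real \<Rightarrow> 'a::euclidean_space"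
  assumes T: "0 < c0 * R\<^sup>2"
    and near: "\<And>i k t. i < N \<Longrightarrow> k < nat \<lceil>c0 * R\<^sup>2\<rceil> \<Longrightarrow> t \<in> {real k..real k + 1} \<Longrightarrow>
                 dist (w i (real k)) (w i t) \<le> \<rho> (i, k)"
  shows "Phi c0 R N w \<subseteq> (\<Union>p\<in>{..<N} \<times> {..<nat \<lceil>c0 * R\<^sup>2\<rceil>}. cball (w (fst p) (real (snd p))) (1 + \<rho> p))"
proof
  fix y assume "y \<in> Phi c0 R N w"
  then obtain i t where i: "i < N" and t: "t \<in> run_times c0 R (w i)" and y: "dist (w i t) y \<le> 1"
    by (auto simp: Phi_def)
  have "0 \<le> t" "t \<le> c0 * R\<^sup>2" using t by (auto simp: run_times_def)
  then obtain k where k: "k < nat \<lceil>c0 * R\<^sup>2\<rceil>" "real k \<le> t" "t \<le> real k + 1"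
    using T by (rule obtain_unit_interval_below_ceiling)
  have "dist (w i (real k)) y \<le> dist (w i (real k)) (w i t) + dist (w i t) y"
    by (rule dist_triangle)
  also have "\<dots> \<le> 1 + \<rho> (i, k)"
    using near[OF i k(1)] k(2,3) y by fastforce
  finally show "y \<in> (\<Union>p\<in>{..<N} \<times> {..<nat \<lceil>c0 * R\<^sup>2\<rceil>}. cball (w (fst p) (real (snd p))) (1 + \<rho> p))"
    using i k by force
qed

lemma one_plus_power_le:
  fixes x :: real
  assumes "0 \<le> x"
  shows "(1 + x) ^ n \<le> 2 ^ n * (1 + x ^ n)"
proof -
  have "(1 + x) ^ n \<le> (2 * max 1 x) ^ n"
    using assms by (intro power_mono) auto
  also have "\<dots> = 2 ^ n * max 1 x ^ n"
    by (simp add: power_mult_distrib)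
  also have "max 1 x ^ n \<le> 1 + x ^ n"
    using assms by (cases "x \<le> 1") (simp_all add: max_def)
  finally show ?thesis by simp
qed

lemma cap_Phi_le_dyadic_radii:
  fixes w :: "nat \<Rightarrow> real \<Rightarrow> 'a::euclidean_space"
  assumes D: "3 \<le> DIM('a)" and T: "0 < c0 * R\<^sup>2"
    and cont: "\<And>i. i < N \<Longrightarrow> continuous_on {0..} (w i)"
    and finite: "\<And>i k. i < N \<Longrightarrow> k < nat \<lceil>c0 * R\<^sup>2\<rceil> \<Longrightarrow> dyadic_energy (DIM('a) - 2) (w i) (real k) \<noteq> \<infinity>"
  shows "cap (Phi c0 R N w) \<le> ennreal (\<Sum>(i, k)\<in>{..<N} \<times> {..<nat \<lceil>c0 * R\<^sup>2\<rceil>}.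
           (1 + 10 * root (2 * (DIM('a) - 2)) (enn2real (dyadic_energy (DIM('a) - 2) (w i) (real k))))
             ^ (DIM('a) - 2) / green_const TYPE('a))"
proof -
  define \<rho> where "\<rho> = (\<lambda>(i, k). 10 * root (2 * (DIM('a) - 2)) (enn2real (dyadic_energy (DIM('a) - 2) (w i) (real k))))"
  have near: "dist (w i (real k)) (w i t) \<le> \<rho> (i, k)"
    if "i < N" "k < nat \<lceil>c0 * R\<^sup>2\<rceil>" "t \<in> {real k..real k + 1}" for i k t
  proof -
    have "continuous_on {real k..real k + 1} (w i)"
      using cont[OF that(1)] by (rule continuous_on_subset) auto
    then show ?thesis
      using dist_le_dyadic_energy[OF _ finite[OF that(1,2)] _ that(3)] D by (simp add: \<rho>_def)
  qed
  have \<rho>_nonneg: "0 \<le> \<rho> p" for p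
    by (simp add: \<rho>_def split_beta real_root_ge_zero)
  have cover: "Phi c0 R N w \<subseteq> (\<Union>p\<in>{..<N} \<times> {..<nat \<lceil>c0 * R\<^sup>2\<rceil>}. cball (w (fst p) (real (snd p))) (1 + \<rho> p))"
    using near by (rule Phi_subset_UN_cball[OF T])
  have "cap (Phi c0 R N w) \<le> ennreal (\<Sum>p\<in>{..<N} \<times> {..<nat \<lceil>c0 * R\<^sup>2\<rceil>}.
      (1 + \<rho> p) ^ (DIM('a) - 2) / green_const TYPE('a))"
    using \<rho>_nonneg by (intro cap_le_sum_cball[OF D _ _ cover]) (auto intro: add_pos_nonneg)
  then show ?thesis by (simp add: \<rho>_def split_beta)
qed

lemma dyadic_radius_power_le:
  assumes "0 \<le> z" "0 < q"
  shows "(1 + 10 * root (2 * q) z) ^ (2 * q) \<le> 400 ^ q * (1 + z)"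
proof -
  have "(1 + 10 * root (2 * q) z) ^ (2 * q) \<le> 2 ^ (2 * q) * (1 + (10 * root (2 * q) z) ^ (2 * q))"
    using assms by (intro one_plus_power_le) (simp add: real_root_ge_zero)
  also have "(10 * root (2 * q) z) ^ (2 * q) = (10 ^ 2) ^ q * z"
    using assms by (simp only: power_mult_distrib real_root_pow_pos2 power_mult[symmetric])
  also have "2 ^ (2 * q) * (1 + (10 ^ 2) ^ q * z) \<le> (4::real) ^ q * (100 ^ q * (1 + z))"
  proof -
    have "1 + 100 ^ q * z \<le> 100 ^ q * (1 + z)"
      using assms by (simp add: algebra_simps)
    then show ?thesis by (simp add: power_mult)
  qed
  also have "\<dots> = 400 ^ q * (1 + z)"
    by (simp add: power_mult_distrib[symmetric])
  finally show ?thesis .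
qed

lemma sum_power_bounds:
  fixes r g :: "'b \<Rightarrow> real" and c \<kappa> :: real
  assumes r: "\<And>p. 1 \<le> r p" and rg: "\<And>p. r p ^ (2 * q) \<le> c * g p" and \<kappa>: "0 < \<kappa>"
  shows "(\<Sum>p\<in>J. r p ^ q / \<kappa>) \<le> c / \<kappa> * (\<Sum>p\<in>J. g p)"
    and "(\<Sum>p\<in>J. r p ^ q / \<kappa>)\<^sup>2 \<le> card J * c / \<kappa>\<^sup>2 * (\<Sum>p\<in>J. g p)"
proof -
  have "r p ^ q \<le> r p ^ (2 * q)" for p
    using r[of p] by (intro power_increasing) auto
  then have "r p ^ q / \<kappa> \<le> c / \<kappa> * g p" for p
    using order_trans[OF _ rg] \<kappa> by (simp add: divide_right_mono)
  then show "(\<Sum>p\<in>J. r p ^ q / \<kappa>) \<le> c / \<kappa> * (\<Sum>p\<in>J. g p)"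
    by (simp add: sum_distrib_left sum_mono)
  have "(\<Sum>p\<in>J. r p ^ q / \<kappa>)\<^sup>2 \<le> (\<Sum>p\<in>J. (r p ^ q / \<kappa>)\<^sup>2) * card J"
    by (rule sum_squared_le_sum_of_squares)
  also have "\<dots> \<le> (\<Sum>p\<in>J. c / \<kappa>\<^sup>2 * g p) * card J"
    using divide_right_mono[OF rg, of "\<kappa>\<^sup>2"]
    by (intro mult_right_mono sum_mono) (simp_all add: power_divide power_mult[symmetric] mult.commute)
  also have "\<dots> = card J * c / \<kappa>\<^sup>2 * (\<Sum>p\<in>J. g p)"
    by (simp add: sum_distrib_left[symmetric] sum_divide_distrib[symmetric])
  finally show "(\<Sum>p\<in>J. r p ^ q / \<kappa>)\<^sup>2 \<le> card J * c / \<kappa>\<^sup>2 * (\<Sum>p\<in>J. g p)" .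
qed

lemma ennreal_le_ennreal_mult: "x \<le> a * b \<Longrightarrow> 0 \<le> a \<Longrightarrow> 0 \<le> b \<Longrightarrow> ennreal x \<le> ennreal a * ennreal b"
  by (metis ennreal_leI ennreal_mult)

lemma cap_Phi_le_dyadic_energy:
  fixes w :: "nat \<Rightarrow> real \<Rightarrow> 'a::euclidean_space"
  assumes D: "3 \<le> DIM('a)" and T: "0 < c0 * R\<^sup>2"
    and cont: "\<And>i. i < N \<Longrightarrow> continuous_on {0..} (w i)"
  defines "q \<equiv> DIM('a) - 2" and "n \<equiv> nat \<lceil>c0 * R\<^sup>2\<rceil>"
  defines "S \<equiv> (\<Sum>(i, k)\<in>{..<N} \<times> {..<n}. 1 + dyadic_energy q (w i) (real k))"
  shows "cap (Phi c0 R N w) \<le> ennreal (400 ^ q / green_const TYPE('a)) * S \<and>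
         (cap (Phi c0 R N w))\<^sup>2 \<le> ennreal (N * n * 400 ^ q / (green_const TYPE('a))\<^sup>2) * S"
proof -
  define J where "J = {..<N} \<times> {..<n}"
  define \<kappa> where "\<kappa> = green_const TYPE('a)"
  have \<kappa>: "0 < \<kappa>" using green_const_pos[OF D] by (simp add: \<kappa>_def)
  have card_J: "card J = N * n" by (simp add: J_def card_cartesian_product)
  have S_J: "S = (\<Sum>(i, k)\<in>J. 1 + dyadic_energy q (w i) (real k))" by (simp add: S_def J_def)
  show ?thesis
  proof (cases "\<exists>(i, k)\<in>J. dyadic_energy q (w i) (real k) = \<infinity>")
    case True
    then have "0 < N" "0 < n" "S = \<infinity>"
      by (auto simp: S_J ennreal_sum_eq_top J_def)
    then show ?thesis
      using \<kappa> by (simp add: \<kappa>_def)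
  next
    case False
    define z where "z = (\<lambda>(i, k). enn2real (dyadic_energy q (w i) (real k)))"
    define r where "r = (\<lambda>p. 1 + 10 * root (2 * q) (z p))"
    have q: "0 < q" using D by (simp add: q_def)
    have z: "0 \<le> z p" for p by (simp add: z_def split_beta)
    have "cap (Phi c0 R N w) \<le> ennreal (\<Sum>(i, k)\<in>{..<N} \<times> {..<nat \<lceil>c0 * R\<^sup>2\<rceil>}.
        (1 + 10 * root (2 * (DIM('a) - 2)) (enn2real (dyadic_energy (DIM('a) - 2) (w i) (real k))))
          ^ (DIM('a) - 2) / green_const TYPE('a))"
      by (rule cap_Phi_le_dyadic_radii[OF D T cont]) (use False in \<open>auto simp: J_def n_def q_def\<close>)
    then have cap_le: "cap (Phi c0 R N w) \<le> ennreal (\<Sum>p\<in>J. r p ^ q / \<kappa>)"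
      by (simp add: J_def n_def q_def r_def z_def \<kappa>_def split_beta)
    have S_eq: "S = ennreal (\<Sum>p\<in>J. 1 + z p)"
      using False z by (auto simp: S_J z_def split_beta ennreal_plus ennreal_enn2real_if
          intro!: sum.cong simp flip: sum_ennreal)
    have sum_z: "0 \<le> (\<Sum>p\<in>J. 1 + z p)"
      using z by (intro sum_nonneg) (simp add: add_nonneg_nonneg)
    have r: "1 \<le> r p" "r p ^ (2 * q) \<le> 400 ^ q * (1 + z p)" for p
      using z[of p] unfolding r_def by (simp_all add: real_root_ge_zero dyadic_radius_power_le q)
    note bounds = sum_power_bounds[of r q "400 ^ q" "\<lambda>p. 1 + z p", OF r \<kappa>, where J=J]
    have "cap (Phi c0 R N w) \<le> ennreal (400 ^ q / \<kappa>) * S"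
      using order_trans[OF cap_le ennreal_le_ennreal_mult[OF bounds(1)]] \<kappa> sum_z by (simp add: S_eq)
    moreover have "(cap (Phi c0 R N w))\<^sup>2 \<le> ennreal ((\<Sum>p\<in>J. r p ^ q / \<kappa>)\<^sup>2)"
      using power_mono[OF cap_le, of 2] r(1) \<kappa>
      by (simp add: ennreal_power[symmetric] sum_nonneg order_trans[OF zero_le_one])
    then have "(cap (Phi c0 R N w))\<^sup>2 \<le> ennreal (card J * 400 ^ q / \<kappa>\<^sup>2) * S"
      using order_trans[OF _ ennreal_le_ennreal_mult[OF bounds(2)]] \<kappa> sum_z by (simp add: S_eq)
    ultimately show ?thesis by (simp add: \<kappa>_def card_J)
  qed
qed

section \<open>Expected capacity\<close>

lemma nn_integral_le_cmult_sum:
  assumes J: "finite J" and c: "0 \<le> c" and B: "0 \<le> B"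
    and le: "\<And>\<omega>. \<omega> \<in> space M \<Longrightarrow> f \<omega> \<le> ennreal c * (\<Sum>p\<in>J. g p \<omega>)"
    and meas: "\<And>p. p \<in> J \<Longrightarrow> g p \<in> borel_measurable M"
    and bound: "\<And>p. p \<in> J \<Longrightarrow> (\<integral>\<^sup>+\<omega>. g p \<omega> \<partial>M) \<le> ennreal B"
  shows "(\<integral>\<^sup>+\<omega>. f \<omega> \<partial>M) \<le> ennreal (c * card J * B)"
proof -
  have "(\<integral>\<^sup>+\<omega>. f \<omega> \<partial>M) \<le> (\<integral>\<^sup>+\<omega>. ennreal c * (\<Sum>p\<in>J. g p \<omega>) \<partial>M)"
    using le by (rule nn_integral_mono)
  also have "\<dots> = ennreal c * (\<Sum>p\<in>J. \<integral>\<^sup>+\<omega>. g p \<omega> \<partial>M)"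
    using meas by (simp add: nn_integral_cmult nn_integral_sum borel_measurable_sum)
  also have "\<dots> \<le> ennreal c * (\<Sum>p\<in>J. ennreal B)"
    using bound by (intro mult_left_mono sum_mono) auto
  also have "\<dots> = ennreal (c * card J * B)"
    using c B by (simp add: ennreal_mult ennreal_of_nat_eq_real_of_nat mult.assoc)
  finally show ?thesis .
qed

lemma nn_integral_one_plus_dyadic_energy_le:
  fixes X :: "nat \<Rightarrow> real \<Rightarrow> 'w \<Rightarrow> 'a::euclidean_space"
  assumes BM: "indep_BMs M N X x" and i: "i < N" and "0 \<le> a" "3 \<le> q"
  shows "(\<integral>\<^sup>+\<omega>. 1 + dyadic_energy q (\<lambda>t. X i t \<omega>) a \<partial>M) \<le> ennreal (1 + 2 * gauss_moment_const DIM('a) q)"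
proof -
  have "(\<integral>\<^sup>+\<omega>. 1 + dyadic_energy q (\<lambda>t. X i t \<omega>) a \<partial>M)
      = (\<integral>\<^sup>+\<omega>. 1 \<partial>M) + (\<integral>\<^sup>+\<omega>. dyadic_energy q (\<lambda>t. X i t \<omega>) a \<partial>M)"
    using dyadic_energy_measurable[OF BM i \<open>0 \<le> a\<close>] by (simp add: nn_integral_add)
  also have "(\<integral>\<^sup>+\<omega>. 1 \<partial>M) = 1"
    using prob_space.emeasure_space_1[OF indep_BMs_prob_space[OF BM]] by simp
  also have "(\<integral>\<^sup>+\<omega>. dyadic_energy q (\<lambda>t. X i t \<omega>) a \<partial>M) \<le> ennreal (2 * gauss_moment_const DIM('a) q)"
    using assms by (rule nn_integral_dyadic_energy_le)
  finally show ?thesis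
    by (simp add: ennreal_plus gauss_moment_const_nonneg)
qed

lemma expected_cap_Phi_le:
  fixes X :: "nat \<Rightarrow> real \<Rightarrow> 'w \<Rightarrow> 'a::euclidean_space"
  assumes D: "5 \<le> DIM('a)" and BM: "indep_BMs M N X x" and T: "0 < c0 * R\<^sup>2"
  defines "q \<equiv> DIM('a) - 2" and "n \<equiv> nat \<lceil>c0 * R\<^sup>2\<rceil>"
  defines "B \<equiv> 400 ^ q * (1 + 2 * gauss_moment_const DIM('a) q)"
  shows "(\<integral>\<^sup>+\<omega>. cap (Phi c0 R N (\<lambda>i t. X i t \<omega>)) \<partial>M)
           \<le> ennreal (B / green_const TYPE('a) * (N * n))"
    and "(\<integral>\<^sup>+\<omega>. (cap (Phi c0 R N (\<lambda>i t. X i t \<omega>)))\<^sup>2 \<partial>M)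
           \<le> ennreal (B / (green_const TYPE('a))\<^sup>2 * (N * n) ^ 2)"
proof -
  define J where "J = {..<N} \<times> {..<n}"
  define g where "g p \<omega> = 1 + dyadic_energy q (\<lambda>t. X (fst p) t \<omega>) (real (snd p))" for p \<omega>
  have \<kappa>: "0 < green_const TYPE('a)" using D by (intro green_const_pos) simp
  have A: "0 \<le> gauss_moment_const DIM('a) q" by (rule gauss_moment_const_nonneg)
  have card_J: "card J = N * n" by (simp add: J_def card_cartesian_product)
  have pointwise: "cap (Phi c0 R N (\<lambda>i t. X i t \<omega>)) \<le> ennreal (400 ^ q / green_const TYPE('a)) * (\<Sum>p\<in>J. g p \<omega>) \<and>
      (cap (Phi c0 R N (\<lambda>i t. X i t \<omega>)))\<^sup>2 \<le> ennreal (N * n * 400 ^ q / (green_const TYPE('a))\<^sup>2) * (\<Sum>p\<in>J. g p \<omega>)"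
    if "\<omega> \<in> space M" for \<omega>
    using cap_Phi_le_dyadic_energy[of c0 R N "\<lambda>i t. X i t \<omega>", OF _ T indep_BMs_continuous[OF BM that]] D
    by (simp add: J_def g_def q_def n_def split_beta)
  have meas: "g p \<in> borel_measurable M" if "p \<in> J" for p
    unfolding g_def using that
    by (intro borel_measurable_add borel_measurable_const dyadic_energy_measurable[OF BM]) (auto simp: J_def)
  have bound: "(\<integral>\<^sup>+\<omega>. g p \<omega> \<partial>M) \<le> ennreal (1 + 2 * gauss_moment_const DIM('a) q)" if "p \<in> J" for p
    unfolding g_def using that D
    by (intro nn_integral_one_plus_dyadic_energy_le[OF BM]) (auto simp: J_def q_def)
  have J: "finite J" by (simp add: J_def)
  show "(\<integral>\<^sup>+\<omega>. cap (Phi c0 R N (\<lambda>i t. X i t \<omega>)) \<partial>M)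
           \<le> ennreal (B / green_const TYPE('a) * (N * n))"
    using nn_integral_le_cmult_sum[OF J _ _ conjunct1[OF pointwise] meas bound] \<kappa> A
    by (simp add: B_def card_J mult_ac)
  show "(\<integral>\<^sup>+\<omega>. (cap (Phi c0 R N (\<lambda>i t. X i t \<omega>)))\<^sup>2 \<partial>M)
           \<le> ennreal (B / (green_const TYPE('a))\<^sup>2 * (N * n) ^ 2)"
    using nn_integral_le_cmult_sum[OF J _ _ conjunct2[OF pointwise] meas bound] \<kappa> A
    by (simp add: B_def card_J power2_eq_square mult_ac)
qed

lemma nat_ceiling_le_mult_square:
  fixes c R :: real
  assumes "0 < c" "1 \<le> R"
  shows "real (nat \<lceil>c * R\<^sup>2\<rceil>) \<le> (c + 1) * R\<^sup>2"
proof -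
  have "real (nat \<lceil>c * R\<^sup>2\<rceil>) = of_int \<lceil>c * R\<^sup>2\<rceil>" "1 \<le> R\<^sup>2"
    using assms by (simp_all add: one_le_power)
  then show ?thesis
    using ceiling_correct[of "c * R\<^sup>2"] by (simp add: distrib_right)
qed

lemma expected_cap_Phi_le_scaled:
  fixes X :: "nat \<Rightarrow> real \<Rightarrow> 'w \<Rightarrow> 'a::euclidean_space"
  assumes D: "5 \<le> DIM('a)" and BM: "indep_BMs M N X x" and c0: "0 < c0" and R: "1 \<le> R"
  defines "K \<equiv> 400 ^ (DIM('a) - 2) * (1 + 2 * gauss_moment_const DIM('a) (DIM('a) - 2))
                  * (c0 + 1) / green_const TYPE('a)"
  shows "(\<integral>\<^sup>+\<omega>. cap (Phi c0 R N (\<lambda>i t. X i t \<omega>)) \<partial>M) \<le> ennreal (K * (N * R\<^sup>2))"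
    and "(\<integral>\<^sup>+\<omega>. (cap (Phi c0 R N (\<lambda>i t. X i t \<omega>)))\<^sup>2 \<partial>M) \<le> ennreal (K\<^sup>2 * (N * R\<^sup>2)\<^sup>2)"
proof -
  define B where "B = 400 ^ (DIM('a) - 2) * (1 + 2 * gauss_moment_const DIM('a) (DIM('a) - 2))"
  define \<kappa> where "\<kappa> = green_const TYPE('a)"
  have \<kappa>: "0 < \<kappa>" using D by (simp add: \<kappa>_def green_const_pos)
  have "1 * 1 \<le> (400::real) ^ (DIM('a) - 2) * (1 + 2 * gauss_moment_const DIM('a) (DIM('a) - 2))"
    by (intro mult_mono) (simp_all add: gauss_moment_const_nonneg)
  then have B: "1 \<le> B" by (simp add: B_def)
  have T: "0 < c0 * R\<^sup>2" using c0 R by simp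
  have "real N * nat \<lceil>c0 * R\<^sup>2\<rceil> \<le> real N * ((c0 + 1) * R\<^sup>2)"
    using nat_ceiling_le_mult_square[OF c0 R] by (intro mult_left_mono) auto
  then have Nn: "real N * nat \<lceil>c0 * R\<^sup>2\<rceil> \<le> (c0 + 1) * (real N * R\<^sup>2)"
    by (simp add: mult_ac)
  have "B / \<kappa> * (N * nat \<lceil>c0 * R\<^sup>2\<rceil>) \<le> K * (N * R\<^sup>2)"
    using mult_left_mono[OF Nn, of "B / \<kappa>"] \<kappa> B by (simp add: K_def B_def \<kappa>_def mult_ac)
  then show "(\<integral>\<^sup>+\<omega>. cap (Phi c0 R N (\<lambda>i t. X i t \<omega>)) \<partial>M) \<le> ennreal (K * (N * R\<^sup>2))"
    using expected_cap_Phi_le(1)[OF D BM T] by (auto simp: B_def \<kappa>_def intro: order_trans ennreal_leI)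
  have "B / \<kappa>\<^sup>2 * (N * nat \<lceil>c0 * R\<^sup>2\<rceil>) ^ 2 \<le> B / \<kappa>\<^sup>2 * ((c0 + 1) * (N * R\<^sup>2))\<^sup>2"
    using power_mono[OF Nn, of 2] \<kappa> B by (intro mult_left_mono) simp_all
  also have "\<dots> = B * ((c0 + 1) / \<kappa>)\<^sup>2 * (N * R\<^sup>2)\<^sup>2"
    by (simp add: power_mult_distrib power_divide)
  also have "\<dots> \<le> B\<^sup>2 * ((c0 + 1) / \<kappa>)\<^sup>2 * (N * R\<^sup>2)\<^sup>2"
    using B by (intro mult_right_mono) (simp_all add: power2_eq_square)
  also have "\<dots> = K\<^sup>2 * (N * R\<^sup>2)\<^sup>2"
    by (simp add: K_def B_def \<kappa>_def power_mult_distrib power_divide)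
  finally show "(\<integral>\<^sup>+\<omega>. (cap (Phi c0 R N (\<lambda>i t. X i t \<omega>)))\<^sup>2 \<partial>M) \<le> ennreal (K\<^sup>2 * (N * R\<^sup>2)\<^sup>2)"
    using expected_cap_Phi_le(2)[OF D BM T] by (auto simp: B_def \<kappa>_def intro: order_trans ennreal_leI)
qed

theorem lemma3p6:
  assumes dim: "DIM('a::euclidean_space) \<ge> 5"
    and c0_pos: "c0 > 0"
    and c0_prop: "\<forall>R>0. \<forall>(M' :: 'w measure) B. brownian_motion M' B (0::'a) \<longrightarrow>
        measure M' {\<omega> \<in> space M'. \<forall>t\<in>{0..c0 * R\<^sup>2}. B t \<omega> \<in> ball 0 (R / 2)} \<ge> 0.99"
  shows "\<exists>C>0. \<forall>R>1. \<forall>N>0. \<forall>(x :: nat \<Rightarrow> 'a) (M :: 'w measure) X.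
           indep_BMs M N X x \<longrightarrow>
             (\<integral>\<^sup>+ \<omega>. cap (Phi c0 R N (\<lambda>i t. X i t \<omega>)) \<partial>M) \<le> ennreal (C * real N * R\<^sup>2) \<and>
             (\<integral>\<^sup>+ \<omega>. (cap (Phi c0 R N (\<lambda>i t. X i t \<omega>)))\<^sup>2 \<partial>M) \<le> ennreal (C * (real N)\<^sup>2 * R ^ 4)"
proof -
  define K where "K = 400 ^ (DIM('a) - 2) * (1 + 2 * gauss_moment_const DIM('a) (DIM('a) - 2))
                  * (c0 + 1) / green_const TYPE('a)"
  have K: "0 < K"
    using dim c0_pos by (simp add: K_def green_const_pos gauss_moment_const_nonneg add_pos_nonneg)
  show ?thesis
  proof (intro exI[of _ "K + K\<^sup>2"] conjI allI impI)
    show "0 < K + K\<^sup>2" using K by (intro add_pos_nonneg) auto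
    fix R :: real and N :: nat and x :: "nat \<Rightarrow> 'a" and M :: "'w measure" and X
    assume "1 < R" and "0 < N" and BM: "indep_BMs M N X x"
    note bounds = expected_cap_Phi_le_scaled[OF dim BM c0_pos less_imp_le[OF \<open>1 < R\<close>], folded K_def]
    have "K * (N * R\<^sup>2) \<le> (K + K\<^sup>2) * (N * R\<^sup>2)" "K\<^sup>2 * (N * R\<^sup>2)\<^sup>2 \<le> (K + K\<^sup>2) * (N * R\<^sup>2)\<^sup>2"
      using K by (intro mult_right_mono; simp)+
    with bounds show
      "(\<integral>\<^sup>+ \<omega>. cap (Phi c0 R N (\<lambda>i t. X i t \<omega>)) \<partial>M) \<le> ennreal ((K + K\<^sup>2) * real N * R\<^sup>2)"
      "(\<integral>\<^sup>+ \<omega>. (cap (Phi c0 R N (\<lambda>i t. X i t \<omega>)))\<^sup>2 \<partial>M) \<le> ennreal ((K + K\<^sup>2) * (real N)\<^sup>2 * R ^ 4)"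
      by (auto simp: mult.assoc power_mult_distrib simp flip: power_mult intro: order_trans ennreal_leI)
  qed
qed


end
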